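(* For any two dynamic metric spaces $\gamma_X=(X,d_X(\cdot))$ and $\gamma_Y=(Y,d_Y(\cdot))$, \[d_{\mathrm{I},6}(\mathrm{rk}_0(\gamma_X),\mathrm{rk}_0(\gamma_Y))\le d_{\mathrm{I},3}(\beta_0^{\gamma_X},\beta_0^{\gamma_Y}).\]
   Context: A dynamic metric space (DMS) is a pair $\gamma_X=(X,d_X(\cdot))$ where $X$ is a nonempty finite set and $d_X(\cdot):\mathbf{R}\times X\times X\to\mathbf{R}_+$ satisfies: each $d_X(t)$ is a pseudometric, some $d_X(t_0)$ is a metric, and $t\mapsto d_X(t)(x,x')$ is continuous for all $x,x'$. $\mathbf{Int}$ is the set of finite closed intervals of $\mathbf{R}$; for $I\in\mathbf{Int}$, $(\bigvee_I d_X)(x,x'):=\min_{s\in I}d_X(s)(x,x')$; for $I=[u,u']$, $I^\varepsilon=[u-\varepsilon,u'+\varepsilon]$. For symmetric $d$ vanishing on the diagonal, $\mathcal{R}_\delta(X,d)$ is the simplicial complex on $X$ whose simplices are the nonempty $\sigma$ with $d(x,x')\le\delta$ for all $x,x'\in\sigma$; homology is over a fixed field. Betti-0 function: $\beta_0^{\gamma_X}:\mathbf{Int}\times\mathbf{R}_+\to\mathbf{Z}_+$, $(I,\delta)\mapsto\dim\mathrm{H}_0(\mathcal{R}_\delta(X,\bigvee_I d_X))$. For $F,G:\mathbf{Int}\times\mathbf{R}_+\to\mathbf{Z}_+$, $d_{\mathrm{I},3}(F,G):=\inf\{\varepsilon\ge0:\forall(I,\delta),\ F(I,\delta)\ge G(I^\varepsilon,\delta+\varepsilon),\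 G(I,\delta)\ge F(I^\varepsilon,\delta+\varepsilon)\}$. $\mathbf{R}^6_\times$ is $\mathbf{R}^6$ with $\mathbf{a}\le\mathbf{b}$ iff $a_1\le b_1$, $a_2\ge b_2$, $a_3\ge b_3$, $a_4\ge b_4$, $a_5\le b_5$, $a_6\le b_6$. $\mathbf{a}$ is admissible if $a_1\le a_2$, $a_4\le a_5$, $a_3,a_6\ge0$, $[a_1,a_2]\subseteq[a_4,a_5]$, $a_3\le a_6$; trivially non-admissible if no admissible $\mathbf{b}<\mathbf{a}$ in $\mathbf{R}^6_\times$ exists. $\mathrm{rk}_0(\gamma_X):\mathbf{R}^6\to\mathbf{Z}_+\cup\{\infty\}$ is the rank of $\mathrm{H}_0(\mathcal{R}_{a_3}(X,\bigvee_{[a_1,a_2]}d_X)\hookrightarrow\mathcal{R}_{a_6}(X,\bigvee_{[a_4,a_5]}d_X))$ for admissible $\mathbf{a}$, $\infty$ for trivially non-admissible $\mathbf{a}$, $0$ otherwise. For $F,G:\mathbf{R}^6\to\mathbf{Z}_+\cup\{\infty\}$, with $\mathbf{a}+\vec\varepsilon:=(a_1+\varepsilon,a_2-\varepsilon,a_3-\varepsilon,a_4-\varepsilon,a_5+\varepsilon,a_6+\varepsilon)$, $d_{\mathrm{I},6}(F,G):=\inf\{\varepsilon\ge0:\forall\mathbf{a},\ F(\mathbf{a})\ge G(\mathbf{a}+\vec\varepsilon),\ G(\mathbf{a})\ge F(\mathbf{a}+\vec\varepsilon)\}$. *)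

theory Defs
  imports Complex_Main "HOL-Library.Extended_Real" "HOL-Library.Extended_Nat"
begin

definition pseudometric_on :: "'a set \<Rightarrow> ('a \<Rightarrow> 'a \<Rightarrow> real) \<Rightarrow> bool" where
  "pseudometric_on X d \<longleftrightarrow>
     (\<forall>x\<in>X. \<forall>y\<in>X. d x y \<ge> 0) \<and> (\<forall>x\<in>X. d x x = 0) \<and>
     (\<forall>x\<in>X. \<forall>y\<in>X. d x y = d y x) \<and>
     (\<forall>x\<in>X. \<forall>y\<in>X. \<forall>z\<in>X. d x z \<le> d x y + d y z)"

definition metric_on :: "'a set \<Rightarrow> ('a \<Rightarrow> 'a \<Rightarrow> real) \<Rightarrow> bool" where
  "metric_on X d \<longleftrightarrow> pseudometric_on X d \<and> (\<forall>x\<in>X. \<forall>y\<in>X. d x y = 0 \<longrightarrow> x = y)"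

definition dms :: "'a set \<Rightarrow> (real \<Rightarrow> 'a \<Rightarrow> 'a \<Rightarrow> real) \<Rightarrow> bool" where
  "dms X d \<longleftrightarrow> finite X \<and> X \<noteq> {} \<and>
     (\<forall>t. pseudometric_on X (d t)) \<and> (\<exists>t0. metric_on X (d t0)) \<and>
     (\<forall>x\<in>X. \<forall>y\<in>X. continuous_on UNIV (\<lambda>t. d t x y))"

text \<open>Closed interval [u,u'] represented by the pair (u,u'), with u \<le> u'.\<close>
definition min_over :: "(real \<Rightarrow> 'a \<Rightarrow> 'a \<Rightarrow> real) \<Rightarrow> real \<times> real \<Rightarrow> 'a \<Rightarrow> 'a \<Rightarrow> real" where
  "min_over d I x y = Inf ((\<lambda>s. d s x y) ` {fst I..snd I})"

text \<open>Edge relation (1-skeleton) of the Vietoris-Rips complex R_delta(X,d);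
  H_0 of a simplicial complex is the free vector space on its connected
  components, i.e. on the classes of the reflexive-transitive closure.\<close>
definition rips_edges :: "'a set \<Rightarrow> ('a \<Rightarrow> 'a \<Rightarrow> real) \<Rightarrow> real \<Rightarrow> ('a \<times> 'a) set" where
  "rips_edges X d \<delta> = {(x, y). x \<in> X \<and> y \<in> X \<and> d x y \<le> \<delta>}"

definition rips_components :: "'a set \<Rightarrow> ('a \<Rightarrow> 'a \<Rightarrow> real) \<Rightarrow> real \<Rightarrow> 'a set set" where
  "rips_components X d \<delta> = X // (rips_edges X d \<delta>)\<^sup>*"

definition betti0 :: "'a set \<Rightarrow> ('a \<Rightarrow> 'a \<Rightarrow> real) \<Rightarrow> real \<Rightarrow> nat" where
  "betti0 X d \<delta> = card (rips_components X d \<delta>)"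

text \<open>Rank of H_0(R_delta(X,d) \<hookrightarrow> R_delta'(X,d')): the induced map sends the basis
  element of a component C to the basis element of the component containing C,
  so its rank is the number of distinct image components.\<close>
definition rank_H0_map :: "'a set \<Rightarrow> ('a \<Rightarrow> 'a \<Rightarrow> real) \<Rightarrow> real \<Rightarrow> ('a \<Rightarrow> 'a \<Rightarrow> real) \<Rightarrow> real \<Rightarrow> nat" where
  "rank_H0_map X d \<delta> d' \<delta>' =
     card ((\<lambda>C. (rips_edges X d' \<delta>')\<^sup>* `` C) ` rips_components X d \<delta>)"

definition betti0_fun :: "'a set \<Rightarrow> (real \<Rightarrow> 'a \<Rightarrow> 'a \<Rightarrow> real) \<Rightarrow> real \<times> real \<Rightarrow> real \<Rightarrow> nat" where
  "betti0_fun X d I \<delta> = betti0 X (min_over d I) \<delta>"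

definition enlarge :: "real \<times> real \<Rightarrow> real \<Rightarrow> real \<times> real" where
  "enlarge I \<epsilon> = (fst I - \<epsilon>, snd I + \<epsilon>)"

text \<open>d_{I,3} on functions Int x R_+ \<rightarrow> Z_+ (only values on the domain matter).\<close>
definition dI3 :: "(real \<times> real \<Rightarrow> real \<Rightarrow> nat) \<Rightarrow> (real \<times> real \<Rightarrow> real \<Rightarrow> nat) \<Rightarrow> ereal" where
  "dI3 F G = Inf {ereal \<epsilon> | \<epsilon>. \<epsilon> \<ge> 0 \<and>
     (\<forall>I \<delta>. fst I \<le> snd I \<and> \<delta> \<ge> 0 \<longrightarrow>
        F I \<delta> \<ge> G (enlarge I \<epsilon>) (\<delta> + \<epsilon>) \<and> G I \<delta> \<ge> F (enlarge I \<epsilon>) (\<delta> + \<epsilon>))}"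

type_synonym r6 = "real \<times> real \<times> real \<times> real \<times> real \<times> real"

definition le6 :: "r6 \<Rightarrow> r6 \<Rightarrow> bool" where
  "le6 a b = (case a of (a1,a2,a3,a4,a5,a6) \<Rightarrow> case b of (b1,b2,b3,b4,b5,b6) \<Rightarrow>
     a1 \<le> b1 \<and> a2 \<ge> b2 \<and> a3 \<ge> b3 \<and> a4 \<ge> b4 \<and> a5 \<le> b5 \<and> a6 \<le> b6)"

definition admissible :: "r6 \<Rightarrow> bool" where
  "admissible a = (case a of (a1,a2,a3,a4,a5,a6) \<Rightarrow>
     a1 \<le> a2 \<and> a4 \<le> a5 \<and> a3 \<ge> 0 \<and> a6 \<ge> 0 \<and> {a1..a2} \<subseteq> {a4..a5} \<and> a3 \<le> a6)"

definition trivially_non_admissible :: "r6 \<Rightarrow> bool" where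
  "trivially_non_admissible a \<longleftrightarrow> \<not> (\<exists>b. admissible b \<and> le6 b a \<and> b \<noteq> a)"

definition rk0 :: "'a set \<Rightarrow> (real \<Rightarrow> 'a \<Rightarrow> 'a \<Rightarrow> real) \<Rightarrow> r6 \<Rightarrow> enat" where
  "rk0 X d a = (case a of (a1,a2,a3,a4,a5,a6) \<Rightarrow>
     if admissible a then
       enat (rank_H0_map X (min_over d (a1,a2)) a3 (min_over d (a4,a5)) a6)
     else if trivially_non_admissible a then \<infinity> else 0)"

definition shift6 :: "r6 \<Rightarrow> real \<Rightarrow> r6" where
  "shift6 a \<epsilon> = (case a of (a1,a2,a3,a4,a5,a6) \<Rightarrow>
     (a1 + \<epsilon>, a2 - \<epsilon>, a3 - \<epsilon>, a4 - \<epsilon>, a5 + \<epsilon>, a6 + \<epsilon>))"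

definition dI6 :: "(r6 \<Rightarrow> enat) \<Rightarrow> (r6 \<Rightarrow> enat) \<Rightarrow> ereal" where
  "dI6 F G = Inf {ereal \<epsilon> | \<epsilon>. \<epsilon> \<ge> 0 \<and>
     (\<forall>a. F a \<ge> G (shift6 a \<epsilon>) \<and> G a \<ge> F (shift6 a \<epsilon>))}"

end

theory Submission
  imports Defs
begin

text \<open>For admissible \<open>a\<close> the inclusion of Rips complexes is surjective on connected components,
  so \<open>rk\<^sub>0(a)\<close> is just the Betti-0 number at the outer parameters \<open>([a\<^sub>4,a\<^sub>5], a\<^sub>6)\<close>.
  The \<open>\<epsilon>\<close>-shift of \<open>a\<close> moves exactly these outer parameters to \<open>([a\<^sub>4-\<epsilon>,a\<^sub>5+\<epsilon>], a\<^sub>6+\<epsilon>)\<close>,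
  so an \<open>\<epsilon>\<close>-interleaving of Betti-0 functions gives the required inequalities whenever both
  \<open>a\<close> and its shift are admissible. In all other cases the value \<open>\<infinity>\<close> or \<open>0\<close> makes the
  inequality trivial: admissibility is convex for the order of \<open>\<real>\<^sup>6\<^sub>\<times>\<close> and trivial
  non-admissibility is inherited downwards.\<close>

lemma rank_H0_map_eq_betti0:
  assumes "rips_edges X d \<delta> \<subseteq> rips_edges X d' \<delta>'"
  shows "rank_H0_map X d \<delta> d' \<delta>' = betti0 X d' \<delta>'"
proof -
  let ?E = "rips_edges X d \<delta>" and ?F = "rips_edges X d' \<delta>'"
  have "?E\<^sup>* \<subseteq> ?F\<^sup>*" using assms by (rule rtrancl_mono)
  then have "?F\<^sup>* `` (?E\<^sup>* `` {x}) = ?F\<^sup>* `` {x}" for x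
    by (auto intro: rtrancl_trans)
  then have "(\<lambda>C. ?F\<^sup>* `` C) ` rips_components X d \<delta> = rips_components X d' \<delta>'"
    unfolding rips_components_def quotient_def by auto
  then show ?thesis unfolding rank_H0_map_def betti0_def by simp
qed

lemma min_over_antimono:
  assumes "\<forall>t. pseudometric_on X (d t)" and "x \<in> X" "y \<in> X"
    and "fst I \<le> snd I" and "{fst I..snd I} \<subseteq> {fst J..snd J}"
  shows "min_over d J x y \<le> min_over d I x y"
proof -
  have "bdd_below ((\<lambda>s. d s x y) ` {fst J..snd J})"
    using assms(1-3) unfolding pseudometric_on_def by (intro bdd_belowI[of _ 0]) auto
  then show ?thesis
    using assms(4,5) unfolding min_over_def by (intro cInf_superset_mono) auto
qed

lemma rips_edges_min_over_mono:
  assumes "\<forall>t. pseudometric_on X (d t)"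
    and "fst I \<le> snd I" and "{fst I..snd I} \<subseteq> {fst J..snd J}" and "\<delta> \<le> \<delta>'"
  shows "rips_edges X (min_over d I) \<delta> \<subseteq> rips_edges X (min_over d J) \<delta>'"
  using min_over_antimono[OF assms(1) _ _ assms(2,3)] assms(4)
  unfolding rips_edges_def by fastforce

lemma rk0_admissible:
  assumes "\<forall>t. pseudometric_on X (d t)" and "admissible (a1, a2, a3, a4, a5, a6)"
  shows "rk0 X d (a1, a2, a3, a4, a5, a6) = enat (betti0_fun X d (a4, a5) a6)"
proof -
  have "rips_edges X (min_over d (a1, a2)) a3 \<subseteq> rips_edges X (min_over d (a4, a5)) a6"
    using assms(2) unfolding admissible_def
    by (intro rips_edges_min_over_mono[OF assms(1)]) auto
  then show ?thesis
    using assms(2) unfolding rk0_def betti0_fun_def by (simp add: rank_H0_map_eq_betti0)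
qed

lemma rk0_trivially_non_admissible:
  "\<not> admissible a \<Longrightarrow> trivially_non_admissible a \<Longrightarrow> rk0 X d a = \<infinity>"
  by (cases a) (simp add: rk0_def)

lemma rk0_not_trivially_non_admissible:
  "\<not> admissible a \<Longrightarrow> \<not> trivially_non_admissible a \<Longrightarrow> rk0 X d a = 0"
  by (cases a) (simp add: rk0_def)

lemma le6_trans: "le6 a b \<Longrightarrow> le6 b c \<Longrightarrow> le6 a c"
  by (cases a; cases b; cases c) (auto simp: le6_def)

lemma le6_antisym: "le6 a b \<Longrightarrow> le6 b a \<Longrightarrow> a = b"
  by (cases a; cases b) (auto simp: le6_def)

lemma le6_shift6: "\<epsilon> \<ge> 0 \<Longrightarrow> le6 a (shift6 a \<epsilon>)"
  by (cases a) (auto simp: le6_def shift6_def)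

lemma admissible_order_convex:
  "admissible b \<Longrightarrow> admissible c \<Longrightarrow> le6 b a \<Longrightarrow> le6 a c \<Longrightarrow> admissible a"
  by (cases a; cases b; cases c) (auto simp: admissible_def le6_def)

lemma trivially_non_admissible_downward:
  assumes "trivially_non_admissible c" and "le6 a c"
  shows "trivially_non_admissible a"
  unfolding trivially_non_admissible_def
proof
  assume "\<exists>b. admissible b \<and> le6 b a \<and> b \<noteq> a"
  then obtain b where b: "admissible b" "le6 b a" "b \<noteq> a" by blast
  have "b \<noteq> c"
    using b(2,3) assms(2) le6_antisym by blast
  with b assms show False
    unfolding trivially_non_admissible_def by (blast intro: le6_trans)
qed

lemma rk0_shift6_le_if_betti0_le:
  assumes "\<forall>t. pseudometric_on X (dX t)" and "\<forall>t. pseudometric_on Y (dY t)" and "\<epsilon> \<ge> 0"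
    and betti0_le: "\<And>I \<delta>. fst I \<le> snd I \<Longrightarrow> \<delta> \<ge> 0 \<Longrightarrow>
        betti0_fun Y dY (enlarge I \<epsilon>) (\<delta> + \<epsilon>) \<le> betti0_fun X dX I \<delta>"
  shows "rk0 Y dY (shift6 a \<epsilon>) \<le> rk0 X dX a"
proof -
  obtain a1 a2 a3 a4 a5 a6 where a: "a = (a1, a2, a3, a4, a5, a6)" by (cases a)
  have le: "le6 a (shift6 a \<epsilon>)" using assms(3) by (rule le6_shift6)
  consider "admissible a" "admissible (shift6 a \<epsilon>)"
    | "\<not> admissible a" "trivially_non_admissible a"
    | "\<not> admissible (shift6 a \<epsilon>)" "\<not> trivially_non_admissible (shift6 a \<epsilon>)"
  proof (cases "admissible (shift6 a \<epsilon>)")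
    case True
    then show thesis
      using that(1,2) admissible_order_convex[OF _ True _ le]
      unfolding trivially_non_admissible_def by blast
  next
    case False
    then show thesis
      using that(2,3) trivially_non_admissible_downward[OF _ le] le
      unfolding trivially_non_admissible_def by metis
  qed
  then show ?thesis
  proof cases
    case 1
    have "a4 \<le> a5" "a6 \<ge> 0" using 1(1) a unfolding admissible_def by auto
    then have "betti0_fun Y dY (a4 - \<epsilon>, a5 + \<epsilon>) (a6 + \<epsilon>) \<le> betti0_fun X dX (a4, a5) a6"
      using betti0_le[of "(a4, a5)" a6] by (simp add: enlarge_def)
    then show ?thesis
      using 1 rk0_admissible[OF assms(1)] rk0_admissible[OF assms(2)] a
      by (simp add: shift6_def)
  next
    case 2
    then show ?thesis by (simp add: rk0_trivially_non_admissible)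
  next
    case 3
    then show ?thesis by (simp add: rk0_not_trivially_non_admissible)
  qed
qed

theorem proposition4p7:
  fixes X :: "'a set" and dX :: "real \<Rightarrow> 'a \<Rightarrow> 'a \<Rightarrow> real"
    and Y :: "'b set" and dY :: "real \<Rightarrow> 'b \<Rightarrow> 'b \<Rightarrow> real"
  assumes "dms X dX" and "dms Y dY"
  shows "dI6 (rk0 X dX) (rk0 Y dY) \<le> dI3 (betti0_fun X dX) (betti0_fun Y dY)"
proof -
  have pX: "\<forall>t. pseudometric_on X (dX t)" and pY: "\<forall>t. pseudometric_on Y (dY t)"
    using assms unfolding dms_def by auto
  show ?thesis
    unfolding dI6_def dI3_def
  proof (rule Inf_superset_mono, safe)
    fix \<epsilon> :: real
    assume "\<epsilon> \<ge> 0" and interleaved: "\<forall>I \<delta>. fst I \<le> snd I \<and> \<delta> \<ge> 0 \<longrightarrow>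
        betti0_fun Y dY (enlarge I \<epsilon>) (\<delta> + \<epsilon>) \<le> betti0_fun X dX I \<delta> \<and>
        betti0_fun X dX (enlarge I \<epsilon>) (\<delta> + \<epsilon>) \<le> betti0_fun Y dY I \<delta>"
    then have "rk0 Y dY (shift6 a \<epsilon>) \<le> rk0 X dX a \<and> rk0 X dX (shift6 a \<epsilon>) \<le> rk0 Y dY a" for a
      using rk0_shift6_le_if_betti0_le[OF pX pY] rk0_shift6_le_if_betti0_le[OF pY pX] by blast
    with \<open>\<epsilon> \<ge> 0\<close> show "\<exists>\<epsilon>'. ereal \<epsilon> = ereal \<epsilon>' \<and> \<epsilon>' \<ge> 0 \<and>
        (\<forall>a. rk0 Y dY (shift6 a \<epsilon>') \<le> rk0 X dX a \<and> rk0 X dX (shift6 a \<epsilon>') \<le> rk0 Y dY a)"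
      by blast
  qed
qed

end
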